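(* Let $\mathrm{BS}$ be the Biggs-Smith graph. (1) Suppose $(u,v),x$ and $(u',v'),x'$ are edge-vertex pairs in $\mathrm{BS}$ (with $uv,u'v'\in E(\mathrm{BS})$) such that $\operatorname{dist}(u,x)=\operatorname{dist}(u',x')$ and $\operatorname{dist}(v,x)=\operatorname{dist}(v',x')$. Then there is an automorphism $\phi$ of $\mathrm{BS}$ with $\phi(u)=u'$, $\phi(v)=v'$, $\phi(x)=x'$. (2) Suppose $(u,v),(x,y)$ and $(u',v'),(x',y')$ are pairs of edges of $\mathrm{BS}$ such that $\operatorname{dist}(a,b)=\operatorname{dist}(a',b')$ for all $(a,b,a',b')\in\{(u,x,u',x'),(u,y,u',y'),(v,x,v',x'),(v,y,v',y')\}$. Then there is an automorphism $\phi$ of $\mathrm{BS}$ with $\phi(u)=u'$, $\phi(v)=v'$, $\phi(x)=x'$, $\phi(y)=y'$.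
   Context: The Biggs-Smith graph $\mathrm{BS}$ is the cubic graph on the $102$ vertices $ia,ib,ic,id,ie,if$ for $i\in\{1,\dots,17\}$ (indices taken modulo 17, with $0$ written as $17$), whose edges are: $ie\,ia$, $ie\,ib$, $ie\,if$, $if\,ic$, $if\,id$ for each $i$; and $ia\,(i+1)a$, $ib\,(i+4)b$, $ic\,(i+2)c$, $id\,(i+8)d$ for each $i$. $\operatorname{dist}$ is graph distance; an automorphism is a bijection of the vertex set preserving adjacency and non-adjacency. *)

theory Defs
  imports Main
begin

text \<open>Biggs-Smith graph. Vertex (i, L) with i in {0..<17} stands for the
vertex written i followed by the letter L in the paper (index 17 of the paper is 0 here).\<close>

datatype bsl = La | Lb | Lc | Ld | Le | Lf

type_synonym bsv = "nat \<times> bsl"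

definition BS_V :: "bsv set" where
  "BS_V = {0..<17} \<times> UNIV"

definition BS_E0 :: "(bsv \<times> bsv) set" where
  "BS_E0 = (\<Union>i\<in>{0..<17::nat}.
     {((i,Le),(i,La)), ((i,Le),(i,Lb)), ((i,Le),(i,Lf)),
      ((i,Lf),(i,Lc)), ((i,Lf),(i,Ld)),
      ((i,La),((i+1) mod 17,La)), ((i,Lb),((i+4) mod 17,Lb)),
      ((i,Lc),((i+2) mod 17,Lc)), ((i,Ld),((i+8) mod 17,Ld))})"

definition BS_adj :: "bsv \<Rightarrow> bsv \<Rightarrow> bool" where
  "BS_adj u v \<longleftrightarrow> (u,v) \<in> BS_E0 \<or> (v,u) \<in> BS_E0"

text \<open>Graph distance: least length of a walk (BS is connected).\<close>
definition BS_dist :: "bsv \<Rightarrow> bsv \<Rightarrow> nat" where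
  "BS_dist u v = (LEAST n. (u,v) \<in> {(a,b). BS_adj a b} ^^ n)"

definition BS_aut :: "(bsv \<Rightarrow> bsv) \<Rightarrow> bool" where
  "BS_aut \<phi> \<longleftrightarrow> bij_betw \<phi> BS_V BS_V \<and>
     (\<forall>a\<in>BS_V. \<forall>b\<in>BS_V. BS_adj (\<phi> a) (\<phi> b) \<longleftrightarrow> BS_adj a b)"

end

theory Submission
  imports Defs
begin

(* Moving the edge uv to a fixed base arc (u0, v0), everything reduces to the stabilizer of that
arc, the dihedral group of order 8 generated by negate and arc_reflection.  Its orbits on vertices
are exactly the classes of vertices with the same distances to u0 and v0, and for every vertex r
the elements fixing r permute transitively the neighbours of r with the same distances to u0 and v0.
Both are finite checks, carried out against explicit tables.  Arc-transitivity itself follows from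
connectivity, given one automorphism reversing the base arc and automorphisms fixing u0 that move
each neighbour of u0 to v0.  Distances from u0 are certified by a table that is a BFS potential,
and distances from v0 are obtained from it through the reversal of the base arc. *)

fun BS_nbrs :: "bsv \<Rightarrow> bsv list" where
  "BS_nbrs (i, La) = [(i, Le), ((i + 1) mod 17, La), ((i + 16) mod 17, La)]"
| "BS_nbrs (i, Lb) = [(i, Le), ((i + 4) mod 17, Lb), ((i + 13) mod 17, Lb)]"
| "BS_nbrs (i, Lc) = [(i, Lf), ((i + 2) mod 17, Lc), ((i + 15) mod 17, Lc)]"
| "BS_nbrs (i, Ld) = [(i, Lf), ((i + 8) mod 17, Ld), ((i + 9) mod 17, Ld)]"
| "BS_nbrs (i, Le) = [(i, La), (i, Lb), (i, Lf)]"
| "BS_nbrs (i, Lf) = [(i, Le), (i, Lc), (i, Ld)]"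

abbreviation BS_edges :: "(bsv \<times> bsv) set" where
  "BS_edges \<equiv> {(a, b). BS_adj a b}"

lemma BS_E0_iff:
  "((i, L), (j, M)) \<in> BS_E0 \<longleftrightarrow> i < 17 \<and>
     (L = Le \<and> j = i \<and> (M = La \<or> M = Lb \<or> M = Lf) \<or>
      L = Lf \<and> j = i \<and> (M = Lc \<or> M = Ld) \<or>
      L = La \<and> M = La \<and> j = (i + 1) mod 17 \<or>
      L = Lb \<and> M = Lb \<and> j = (i + 4) mod 17 \<or>
      L = Lc \<and> M = Lc \<and> j = (i + 2) mod 17 \<or>
      L = Ld \<and> M = Ld \<and> j = (i + 8) mod 17)"
  unfolding BS_E0_def by (cases L; cases M) (simp_all add: ex_disj_distrib)

lemma mod_add_inverse_nat:
  fixes i j c m :: nat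
  assumes "c \<le> m" "j < m" "i = (j + c) mod m"
  shows "j = (i + (m - c)) mod m"
proof -
  have "(i + (m - c)) mod m = (j + c + (m - c)) mod m"
    using assms(3) by (simp add: mod_add_left_eq)
  also have "\<dots> = (j + m) mod m" using assms(1) by simp
  finally show ?thesis using assms(2) by simp
qed

lemma mod_step_sym_iff:
  fixes i j c m :: nat
  assumes "c \<le> m"
  shows "(i < m \<and> j = (i + c) mod m \<or> j < m \<and> i = (j + c) mod m) \<longleftrightarrow>
         i < m \<and> (j = (i + c) mod m \<or> j = (i + (m - c)) mod m)"
  using mod_add_inverse_nat[OF assms] mod_add_inverse_nat[of "m - c" m i j] assms
  by auto

lemma BS_adj_iff_nbrs: "BS_adj a b \<longleftrightarrow> a \<in> BS_V \<and> b \<in> set (BS_nbrs a)"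
proof -
  obtain i L j M where "a = (i, L)" "b = (j, M)" by fastforce
  then show ?thesis
    unfolding BS_adj_def BS_V_def
    by (cases L; cases M; simp add: BS_E0_iff mod_step_sym_iff[of 1 17, simplified]
        mod_step_sym_iff[of 4 17, simplified] mod_step_sym_iff[of 2 17, simplified]
        mod_step_sym_iff[of 8 17, simplified]) auto
qed

lemma BS_adj_in_V: "BS_adj a b \<Longrightarrow> a \<in> BS_V \<and> b \<in> BS_V"
  by (metis BS_adj_def BS_adj_iff_nbrs)

definition BS_V_list :: "bsv list" where
  "BS_V_list = List.product [0..<17] [La, Lb, Lc, Ld, Le, Lf]"

lemma upt_17: "[0..<17] = [0, 1, 2, 3, 4, 5, 6, 7, 8, 9, 10, 11, 12, 13, 14, 15, 16 :: nat]"
  by (simp add: upt_rec)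

lemma BS_V_eq_set: "BS_V = set BS_V_list"
proof -
  have "L \<in> {La, Lb, Lc, Ld, Le, Lf}" for L by (cases L) auto
  then show ?thesis unfolding BS_V_def BS_V_list_def by auto
qed

lemma Ball_BS_V: "(\<forall>a\<in>BS_V. P a) \<longleftrightarrow> list_all P BS_V_list"
  by (simp add: BS_V_eq_set list_all_iff)

lemma finite_BS_V: "finite BS_V"
  unfolding BS_V_eq_set by simp

lemma distinct_BS_nbrs: "a \<in> BS_V \<Longrightarrow> distinct (BS_nbrs a)"
proof -
  have "\<forall>a\<in>set BS_V_list. distinct (BS_nbrs a)" by (simp add: BS_V_list_def upt_17)
  then show "a \<in> BS_V \<Longrightarrow> distinct (BS_nbrs a)" by (simp add: BS_V_eq_set)
qed

lemma length_BS_nbrs: "length (BS_nbrs a) = 3"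
  by (cases a rule: BS_nbrs.cases) auto

section \<open>Automorphisms and distances\<close>

lemma relpow_image:
  assumes "(a, b) \<in> R ^^ n" and "\<And>a b. (a, b) \<in> R \<Longrightarrow> (f a, f b) \<in> R"
  shows "(f a, f b) \<in> R ^^ n"
  using assms(1)
proof (induction n arbitrary: b)
  case (Suc n)
  then obtain c where "(a, c) \<in> R ^^ n" "(c, b) \<in> R" by (auto elim: relpow_Suc_E)
  then show ?case using Suc.IH assms(2) by (auto intro: relpow_Suc_I)
qed simp

lemma BS_aut_adj: "BS_aut \<phi> \<Longrightarrow> BS_adj a b \<Longrightarrow> BS_adj (\<phi> a) (\<phi> b)"
  unfolding BS_aut_def using BS_adj_in_V by blast

lemma BS_aut_in_V: "BS_aut \<phi> \<Longrightarrow> a \<in> BS_V \<Longrightarrow> \<phi> a \<in> BS_V"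
  unfolding BS_aut_def bij_betw_def by blast

lemma BS_aut_id: "BS_aut id"
  unfolding BS_aut_def by simp

lemma BS_aut_comp: "BS_aut \<phi> \<Longrightarrow> BS_aut \<psi> \<Longrightarrow> BS_aut (\<phi> \<circ> \<psi>)"
  unfolding BS_aut_def
  by (metis bij_betw_apply bij_betw_trans comp_apply)

lemma BS_aut_inv_into:
  assumes "BS_aut \<phi>"
  shows "BS_aut (inv_into BS_V \<phi>)" and "a \<in> BS_V \<Longrightarrow> inv_into BS_V \<phi> (\<phi> a) = a"
proof -
  have bij: "bij_betw \<phi> BS_V BS_V"
    and adj: "\<forall>a\<in>BS_V. \<forall>b\<in>BS_V. BS_adj (\<phi> a) (\<phi> b) \<longleftrightarrow> BS_adj a b"
    using assms unfolding BS_aut_def by auto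
  let ?\<psi> = "inv_into BS_V \<phi>"
  have bij_inv: "bij_betw ?\<psi> BS_V BS_V" using bij by (rule bij_betw_inv_into)
  have "BS_adj (?\<psi> a) (?\<psi> b) \<longleftrightarrow> BS_adj a b" if "a \<in> BS_V" "b \<in> BS_V" for a b
    using adj bij_betw_apply[OF bij_inv] bij_betw_inv_into_right[OF bij] that by metis
  then show "BS_aut ?\<psi>" unfolding BS_aut_def using bij_inv by blast
  show "a \<in> BS_V \<Longrightarrow> ?\<psi> (\<phi> a) = a" using bij by (rule bij_betw_inv_into_left)
qed

lemma BS_aut_dist:
  assumes "BS_aut \<phi>" "a \<in> BS_V" "b \<in> BS_V"
  shows "BS_dist (\<phi> a) (\<phi> b) = BS_dist a b"
proof -
  let ?\<psi> = "inv_into BS_V \<phi>"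
  have "(\<phi> a, \<phi> b) \<in> BS_edges ^^ n \<longleftrightarrow> (a, b) \<in> BS_edges ^^ n" for n
  proof
    assume "(\<phi> a, \<phi> b) \<in> BS_edges ^^ n"
    then have "(?\<psi> (\<phi> a), ?\<psi> (\<phi> b)) \<in> BS_edges ^^ n"
      by (rule relpow_image) (use BS_aut_adj BS_aut_inv_into(1)[OF assms(1)] in auto)
    then show "(a, b) \<in> BS_edges ^^ n" using BS_aut_inv_into(2)[OF assms(1)] assms(2,3) by simp
  qed (rule relpow_image, use BS_aut_adj assms(1) in auto)
  then show ?thesis unfolding BS_dist_def by simp
qed

lemma BS_aut_transport:
  assumes "BS_aut \<beta>" "BS_aut \<beta>'" "set ys \<subseteq> BS_V" "map \<beta> xs = map \<beta>' ys"
  shows "\<exists>\<phi>. BS_aut \<phi> \<and> map \<phi> xs = ys"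
proof (intro exI conjI)
  let ?\<phi> = "inv_into BS_V \<beta>' \<circ> \<beta>"
  show "BS_aut ?\<phi>" using BS_aut_comp BS_aut_inv_into(1) assms(1,2) by blast
  have "map ?\<phi> xs = map (inv_into BS_V \<beta>') (map \<beta>' ys)" using assms(4) by (metis map_map)
  also have "\<dots> = ys" using BS_aut_inv_into(2)[OF assms(2)] assms(3) by (induction ys) auto
  finally show "map ?\<phi> xs = ys" .
qed

lemma BS_aut_if_maps_nbrs:
  assumes maps: "\<forall>a\<in>BS_V. \<phi> a \<in> BS_V \<and> \<psi> (\<phi> a) = a \<and>
                         (\<forall>b\<in>set (BS_nbrs a). \<phi> b \<in> set (BS_nbrs (\<phi> a)))"
  shows "BS_aut \<phi>"
proof -
  have inj: "inj_on \<phi> BS_V" using maps by (metis inj_on_inverseI)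
  have into: "\<phi> ` BS_V \<subseteq> BS_V" using maps by auto
  have bij: "bij_betw \<phi> BS_V BS_V"
    using endo_inj_surj[OF finite_BS_V into inj] inj by (simp add: bij_betw_def)
  have nbrs_V: "set (BS_nbrs a) \<subseteq> BS_V" if "a \<in> BS_V" for a
    using that BS_adj_iff_nbrs BS_adj_in_V by blast
  have nbrs_image: "set (BS_nbrs (\<phi> a)) = \<phi> ` set (BS_nbrs a)" if a: "a \<in> BS_V" for a
  proof (rule card_seteq[symmetric])
    show "\<phi> ` set (BS_nbrs a) \<subseteq> set (BS_nbrs (\<phi> a))" using maps a by auto
    have "card (\<phi> ` set (BS_nbrs a)) = card (set (BS_nbrs a))"
      using card_image inj_on_subset[OF inj nbrs_V[OF a]] by blast
    also have "\<dots> = 3" using distinct_card[OF distinct_BS_nbrs[OF a]] length_BS_nbrs by simp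
    finally show "card (set (BS_nbrs (\<phi> a))) \<le> card (\<phi> ` set (BS_nbrs a))"
      using card_length[of "BS_nbrs (\<phi> a)"] length_BS_nbrs by simp
  qed simp
  have "BS_adj (\<phi> a) (\<phi> b) \<longleftrightarrow> BS_adj a b" if a: "a \<in> BS_V" and b: "b \<in> BS_V" for a b
  proof -
    have "BS_adj (\<phi> a) (\<phi> b) \<longleftrightarrow> \<phi> b \<in> \<phi> ` set (BS_nbrs a)"
      using BS_adj_iff_nbrs nbrs_image[OF a] into a by auto
    also have "\<dots> \<longleftrightarrow> b \<in> set (BS_nbrs a)"
      using inj nbrs_V[OF a] b by (meson inj_on_image_mem_iff)
    finally show ?thesis using BS_adj_iff_nbrs a by simp
  qed
  then show ?thesis unfolding BS_aut_def using bij by blast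
qed

lemma BS_potential_le_walk:
  assumes "f s = 0" and step: "\<forall>a\<in>BS_V. \<forall>b\<in>set (BS_nbrs a). f b \<le> f a + 1"
  shows "(s, y) \<in> BS_edges ^^ n \<Longrightarrow> f y \<le> n"
proof (induction n arbitrary: y)
  case (Suc n)
  then obtain c where c: "(s, c) \<in> BS_edges ^^ n" "BS_adj c y" by (auto elim: relpow_Suc_E)
  then have "f y \<le> f c + 1" using step BS_adj_iff_nbrs by blast
  with Suc.IH[OF c(1)] show ?case by simp
qed (use assms(1) in simp)

lemma BS_walk_from_potential:
  assumes "f s = 0"
    and descent: "\<forall>x\<in>BS_V. x \<noteq> s \<longrightarrow> (\<exists>y\<in>set (BS_nbrs x). f y + 1 = f x)"
  shows "y \<in> BS_V \<Longrightarrow> (s, y) \<in> BS_edges ^^ f y"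
proof (induction "f y" arbitrary: y)
  case 0
  then have "y = s" using descent by fastforce
  with "0.hyps" show ?case by simp
next
  case (Suc m)
  then have "y \<noteq> s" using assms(1) by auto
  then obtain z where z: "z \<in> set (BS_nbrs y)" "f z + 1 = f y" using descent Suc.prems by blast
  have "BS_adj y z" using z(1) Suc.prems BS_adj_iff_nbrs by blast
  then have "BS_adj z y" "z \<in> BS_V" using BS_adj_def BS_adj_in_V by blast+
  moreover have "(s, z) \<in> BS_edges ^^ f z" using Suc.hyps z(2) \<open>z \<in> BS_V\<close> by simp
  ultimately have "(s, y) \<in> BS_edges ^^ Suc (f z)" by (auto intro: relpow_Suc_I)
  with z(2) show ?case by simp
qed

lemma BS_dist_eq_potential:
  assumes "f s = 0"
    and "\<forall>a\<in>BS_V. \<forall>b\<in>set (BS_nbrs a). f b \<le> f a + 1"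
    and "\<forall>x\<in>BS_V. x \<noteq> s \<longrightarrow> (\<exists>y\<in>set (BS_nbrs x). f y + 1 = f x)"
    and "x \<in> BS_V"
  shows "BS_dist s x = f x"
  unfolding BS_dist_def
  by (rule Least_equality)
    (use BS_walk_from_potential[OF assms(1,3,4)] BS_potential_le_walk[OF assms(1,2)] in auto)

lemma BS_arc_transitive_criterion:
  assumes reversal: "BS_aut \<tau>" "\<tau> q = p"
    and local_transitive: "\<And>n. BS_adj p n \<Longrightarrow> \<exists>g. BS_aut g \<and> g p = p \<and> g n = q"
    and "(p, a) \<in> BS_edges\<^sup>*" "BS_adj a b"
  shows "\<exists>\<beta>. BS_aut \<beta> \<and> \<beta> a = p \<and> \<beta> b = q"
  using assms(4,5)
proof (induction arbitrary: b rule: rtrancl_induct)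
  case base
  then show ?case using local_transitive by blast
next
  case (step c a)
  then obtain \<beta> where \<beta>: "BS_aut \<beta>" "\<beta> c = p" "\<beta> a = q" by blast
  have "BS_adj p (\<tau> (\<beta> b))"
    using BS_aut_adj[OF reversal(1) BS_aut_adj[OF \<beta>(1) step.prems]] \<beta>(3) reversal(2) by simp
  then obtain g where g: "BS_aut g" "g p = p" "g (\<tau> (\<beta> b)) = q" using local_transitive by blast
  have "BS_aut (g \<circ> \<tau> \<circ> \<beta>)" using BS_aut_comp g(1) reversal(1) \<beta>(1) by blast
  moreover have "(g \<circ> \<tau> \<circ> \<beta>) a = p" "(g \<circ> \<tau> \<circ> \<beta>) b = q"
    using g \<beta>(3) reversal(2) by simp_all
  ultimately show ?case by blast
qed

section \<open>Explicit automorphisms\<close>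

definition tabulated :: "(bsl \<Rightarrow> 'a list) \<Rightarrow> bsv \<Rightarrow> 'a" where
  "tabulated row x = row (snd x) ! fst x"

lemma tabulated_Pair [simp]: "tabulated row (i, L) = row L ! i"
  by (simp add: tabulated_def)

(* Two involutive automorphisms found by computer search: arc_reversal swaps u0 = (0, Le) and
   v0 = (0, La); arc_reflection fixes both and swaps (0, Lb) and (0, Lf). *)
fun arc_reversal_row :: "bsl \<Rightarrow> bsv list" where
  "arc_reversal_row La =
    [(0, Le), (0, Lb), (13, Lb), (9, Lb), (5, Lb), (5, Le), (5, Lf), (5, Lc), (3, Lc),
     (3, Lf), (3, Ld), (11, Ld), (2, Ld), (2, Lf), (2, Lc), (0, Lc), (0, Lf)]"
| "arc_reversal_row Lb =
    [(1, La), (4, Le), (13, Lf), (9, Lf), (1, Le), (4, La), (13, Ld), (9, Lc), (1, Lf),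
     (3, La), (4, Ld), (11, Lc), (1, Ld), (2, La), (4, Lf), (13, Lc), (9, Ld)]"
| "arc_reversal_row Lc =
    [(15, La), (8, Le), (14, La), (8, La), (14, Le), (7, La), (14, Lf), (7, Le), (14, Lc),
     (7, Lb), (12, Lc), (11, Lb), (10, Lc), (15, Lb), (8, Lc), (15, Le), (8, Lf)]"
| "arc_reversal_row Ld =
    [(16, Le), (12, Lb), (12, La), (10, La), (10, Lb), (6, Le), (6, Ld), (7, Ld), (16, Lf),
     (16, Lb), (12, Le), (11, La), (10, Le), (6, Lb), (6, Lf), (15, Ld), (16, Ld)]"
| "arc_reversal_row Le =
    [(0, La), (4, Lb), (13, Le), (9, Le), (1, Lb), (5, La), (5, Ld), (7, Lc), (1, Lc),
     (3, Le), (12, Ld), (11, Lf), (10, Ld), (2, Le), (4, Lc), (15, Lc), (0, Ld)]"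
| "arc_reversal_row Lf =
    [(16, La), (8, Lb), (13, La), (9, La), (14, Lb), (6, La), (14, Ld), (7, Lf), (16, Lc),
     (3, Lb), (12, Lf), (11, Le), (10, Lf), (2, Lb), (6, Lc), (15, Lf), (8, Ld)]"

fun arc_reflection_row :: "bsl \<Rightarrow> bsv list" where
  "arc_reflection_row La =
    [(0, La), (1, La), (2, La), (2, Le), (2, Lf), (2, Ld), (11, Ld), (11, Lf), (11, Lc),
     (9, Lc), (7, Lc), (7, Lf), (7, Ld), (16, Ld), (16, Lf), (16, Le), (16, La)]"
| "arc_reflection_row Lb =
    [(0, Lf), (1, Lf), (3, Le), (15, Lb), (0, Lc), (1, Ld), (3, Lf), (11, Lb), (15, Lc),
     (9, Ld), (3, Lc), (7, Lb), (15, Lf), (0, Ld), (1, Lc), (3, Lb), (15, Le)]"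
| "arc_reflection_row Lc =
    [(4, Lb), (14, Lb), (4, Le), (10, Lb), (4, Lf), (10, Le), (4, Ld), (10, La), (13, Ld),
     (9, La), (5, Ld), (8, La), (14, Ld), (8, Le), (14, Lf), (8, Lb), (14, Le)]"
| "arc_reflection_row Ld =
    [(13, Lb), (5, Lb), (5, La), (6, Le), (6, Lc), (10, Lc), (12, Lf), (12, La), (13, Le),
     (9, Lb), (5, Le), (6, La), (6, Lf), (8, Lc), (12, Lc), (12, Le), (13, La)]"
| "arc_reflection_row Le =
    [(0, Le), (1, Le), (3, La), (2, Lb), (2, Lc), (10, Ld), (3, Ld), (11, Le), (13, Lc),
     (9, Lf), (5, Lc), (7, Le), (15, Ld), (8, Ld), (16, Lc), (16, Lb), (15, La)]"
| "arc_reflection_row Lf =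
    [(0, Lb), (1, Lb), (4, La), (6, Lb), (4, Lc), (10, Lf), (12, Ld), (11, La), (13, Lf),
     (9, Le), (5, Lf), (7, La), (6, Ld), (8, Lf), (14, Lc), (12, Lb), (14, La)]"

definition arc_reversal :: "bsv \<Rightarrow> bsv" where
  "arc_reversal = tabulated arc_reversal_row"

definition arc_reflection :: "bsv \<Rightarrow> bsv" where
  "arc_reflection = tabulated arc_reflection_row"

definition negate :: "bsv \<Rightarrow> bsv" where
  "negate x = ((17 - fst x) mod 17, snd x)"

fun swap_ab_cd :: "bsl \<Rightarrow> bsl" where
  "swap_ab_cd La = Lb" | "swap_ab_cd Lb = La" | "swap_ab_cd Lc = Ld" | "swap_ab_cd Ld = Lc"
| "swap_ab_cd Le = Le" | "swap_ab_cd Lf = Lf"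

(* Multiplication by 4 maps the a-cycle (step 1) onto the b-cycle (step 4) and back
   (4 * 4 = -1 mod 17), and likewise the c-cycle (step 2) onto the d-cycle (step 8). *)
definition times4 :: "bsv \<Rightarrow> bsv" where
  "times4 x = (4 * fst x mod 17, swap_ab_cd (snd x))"

lemma BS_aut_arc_reversal: "BS_aut arc_reversal"
  by (rule BS_aut_if_maps_nbrs[where \<psi> = arc_reversal])
    (unfold Ball_BS_V BS_V_list_def upt_17, simp add: BS_V_def arc_reversal_def)

lemma BS_aut_arc_reflection: "BS_aut arc_reflection"
  by (rule BS_aut_if_maps_nbrs[where \<psi> = arc_reflection])
    (unfold Ball_BS_V BS_V_list_def upt_17, simp add: BS_V_def arc_reflection_def)

lemma BS_aut_negate: "BS_aut negate"
  by (rule BS_aut_if_maps_nbrs[where \<psi> = negate])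
    (unfold Ball_BS_V BS_V_list_def upt_17, simp add: BS_V_def negate_def)

lemma BS_aut_times4: "BS_aut times4"
  by (rule BS_aut_if_maps_nbrs[where \<psi> = "times4 \<circ> times4 \<circ> times4"])
    (unfold Ball_BS_V BS_V_list_def upt_17, simp add: BS_V_def times4_def)

section \<open>The base arc\<close>

definition u0 :: bsv where "u0 = (0, Le)"
definition v0 :: bsv where "v0 = (0, La)"

lemma arc_reversal_v0: "arc_reversal v0 = u0"
  by (simp add: arc_reversal_def u0_def v0_def)

lemma base_arc_in_V: "u0 \<in> BS_V" "v0 \<in> BS_V"
  by (simp_all add: BS_V_def u0_def v0_def)

lemma BS_locally_transitive_u0:
  assumes "BS_adj u0 n"
  shows "\<exists>g. BS_aut g \<and> g u0 = u0 \<and> g n = v0"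
proof -
  have "n \<in> {(0, La), (0, Lb), (0, Lf)}" using assms by (simp add: BS_adj_iff_nbrs u0_def)
  then consider "n = v0" | "n = (0, Lb)" | "n = (0, Lf)" by (auto simp: v0_def)
  then show ?thesis
  proof cases
    case 1
    then show ?thesis using BS_aut_id by auto
  next
    case 2
    then show ?thesis using BS_aut_times4 by (auto simp: times4_def u0_def v0_def)
  next
    case 3
    have "BS_aut (times4 \<circ> arc_reflection)"
      using BS_aut_comp BS_aut_times4 BS_aut_arc_reflection by blast
    with 3 show ?thesis
      by (intro exI[of _ "times4 \<circ> arc_reflection"])
        (simp add: times4_def arc_reflection_def u0_def v0_def)
  qed
qed

fun dist_u0_row :: "bsl \<Rightarrow> nat list" where
  "dist_u0_row La = [1, 2, 3, 4, 4, 5, 6, 6, 5, 5, 6, 6, 5, 4, 4, 3, 2]"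
| "dist_u0_row Lb = [1, 4, 5, 5, 2, 4, 6, 6, 3, 3, 6, 6, 4, 2, 5, 5, 4]"
| "dist_u0_row Lc = [2, 5, 3, 6, 4, 7, 5, 6, 5, 5, 6, 5, 7, 4, 6, 3, 5]"
| "dist_u0_row Ld = [2, 4, 5, 7, 5, 6, 6, 5, 3, 3, 5, 6, 6, 5, 7, 5, 4]"
| "dist_u0_row Le = [0, 3, 4, 5, 3, 5, 7, 7, 4, 4, 7, 7, 5, 3, 5, 4, 3]"
| "dist_u0_row Lf = [1, 4, 4, 6, 4, 6, 6, 6, 4, 4, 6, 6, 6, 4, 6, 4, 4]"

definition dist_u0 :: "bsv \<Rightarrow> nat" where
  "dist_u0 = tabulated dist_u0_row"

lemma dist_u0_potential:
  "dist_u0 u0 = 0"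
  "\<forall>a\<in>BS_V. \<forall>b\<in>set (BS_nbrs a). dist_u0 b \<le> dist_u0 a + 1"
  "\<forall>x\<in>BS_V. x \<noteq> u0 \<longrightarrow> (\<exists>y\<in>set (BS_nbrs x). dist_u0 y + 1 = dist_u0 x)"
  by (unfold Ball_BS_V BS_V_list_def upt_17, simp_all add: dist_u0_def u0_def)

lemma BS_dist_u0: "x \<in> BS_V \<Longrightarrow> BS_dist u0 x = dist_u0 x"
  using BS_dist_eq_potential dist_u0_potential by blast

lemma BS_dist_v0:
  assumes "x \<in> BS_V"
  shows "BS_dist v0 x = dist_u0 (arc_reversal x)"
proof -
  have "BS_dist v0 x = BS_dist (arc_reversal v0) (arc_reversal x)"
    using BS_aut_dist[OF BS_aut_arc_reversal base_arc_in_V(2) assms] by simp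
  also have "\<dots> = dist_u0 (arc_reversal x)"
    using BS_dist_u0 BS_aut_in_V[OF BS_aut_arc_reversal assms] by (simp add: arc_reversal_v0)
  finally show ?thesis .
qed

lemma BS_connected_u0: "x \<in> BS_V \<Longrightarrow> (u0, x) \<in> BS_edges\<^sup>*"
  using BS_walk_from_potential[OF dist_u0_potential(1,3)] relpow_imp_rtrancl by blast

lemma BS_arc_transitive: "BS_adj a b \<Longrightarrow> \<exists>\<beta>. BS_aut \<beta> \<and> \<beta> a = u0 \<and> \<beta> b = v0"
  using BS_arc_transitive_criterion[OF BS_aut_arc_reversal arc_reversal_v0
      BS_locally_transitive_u0 BS_connected_u0] BS_adj_in_V
  by blast

section \<open>Orbits of the stabilizer of the base arc\<close>

(* This is the whole stabilizer of the base arc: the automorphism group has order 2448 and acts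
   transitively on the 306 arcs. *)
definition arc_stabilizer :: "(bsv \<Rightarrow> bsv) list" where
  "arc_stabilizer =
    [id, negate, arc_reflection, negate \<circ> arc_reflection, arc_reflection \<circ> negate,
     negate \<circ> arc_reflection \<circ> negate, arc_reflection \<circ> negate \<circ> arc_reflection,
     negate \<circ> arc_reflection \<circ> negate \<circ> arc_reflection]"

lemma BS_aut_arc_stabilizer: "g \<in> set arc_stabilizer \<Longrightarrow> BS_aut g"
  using BS_aut_id BS_aut_negate BS_aut_arc_reflection BS_aut_comp
  by (auto simp: arc_stabilizer_def)

lemma arc_stabilizer_fixes_base_arc: "g \<in> set arc_stabilizer \<Longrightarrow> g u0 = u0 \<and> g v0 = v0"
  by (auto simp: arc_stabilizer_def u0_def v0_def negate_def arc_reflection_def)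

definition vertex_reps :: "((nat \<times> nat) \<times> bsv) list" where
  "vertex_reps =
    [((0, 1), (0, Le)), ((1, 0), (0, La)), ((1, 2), (0, Lb)), ((2, 1), (1, La)),
     ((2, 3), (0, Lc)), ((3, 2), (1, Le)), ((3, 4), (2, Lc)), ((4, 3), (1, Lb)),
     ((4, 4), (1, Ld)), ((4, 5), (4, Lc)), ((5, 4), (1, Lc)), ((5, 5), (2, Ld)),
     ((5, 6), (4, Ld)), ((6, 5), (3, Lc)), ((6, 6), (5, Lf)), ((6, 7), (5, Ld)),
     ((7, 6), (3, Ld))]"

definition vertex_rep :: "nat \<Rightarrow> nat \<Rightarrow> bsv" where
  "vertex_rep d e = the (map_of vertex_reps (d, e))"

lemma arc_stabilizer_vertex_orbits:
  "\<forall>x\<in>BS_V. vertex_rep (dist_u0 x) (dist_u0 (arc_reversal x)) \<in> (\<lambda>g. g x) ` set arc_stabilizer"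
  unfolding Ball_BS_V BS_V_list_def upt_17
  \<comment> \<open>instantiate x first, so that simp does not copy the symbolic lookup of the
     representative into the eight cases of the image before evaluating it\<close>
  apply (simp only: product.simps list.map append.simps list.pred_inject)
  by (simp add: arc_stabilizer_def vertex_rep_def vertex_reps_def dist_u0_def
      arc_reversal_def arc_reflection_def negate_def)

lemma arc_stabilizer_nbrs_transitive:
  "\<forall>r\<in>BS_V. \<forall>n\<in>set (BS_nbrs r). \<forall>n'\<in>set (BS_nbrs r).
     dist_u0 n = dist_u0 n' \<and> dist_u0 (arc_reversal n) = dist_u0 (arc_reversal n') \<longrightarrow>
     (\<exists>h\<in>set arc_stabilizer. h r = r \<and> h n = n')"
  unfolding Ball_BS_V BS_V_list_def upt_17
  by (simp add: arc_stabilizer_def dist_u0_def arc_reversal_def arc_reflection_def negate_def)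

lemma dist_u0_normalized:
  assumes "BS_aut \<beta>" "\<beta> u = u0" "\<beta> v = v0" "u \<in> BS_V" "v \<in> BS_V" "y \<in> BS_V"
  shows "dist_u0 (\<beta> y) = BS_dist u y" "dist_u0 (arc_reversal (\<beta> y)) = BS_dist v y"
  using BS_aut_dist[OF assms(1,4,6)] BS_aut_dist[OF assms(1,5,6)] assms(2,3)
    BS_dist_u0 BS_dist_v0 BS_aut_in_V[OF assms(1,6)] by simp_all

lemma vertex_normal_form:
  assumes "BS_adj u v" "x \<in> BS_V"
  shows "\<exists>\<beta>. BS_aut \<beta> \<and> map \<beta> [u, v, x] = [u0, v0, vertex_rep (BS_dist u x) (BS_dist v x)]"
proof -
  obtain \<alpha> where \<alpha>: "BS_aut \<alpha>" "\<alpha> u = u0" "\<alpha> v = v0"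
    using BS_arc_transitive[OF assms(1)] by blast
  have \<alpha>x: "\<alpha> x \<in> BS_V" using BS_aut_in_V[OF \<alpha>(1) assms(2)] .
  obtain g where g: "g \<in> set arc_stabilizer"
    "g (\<alpha> x) = vertex_rep (dist_u0 (\<alpha> x)) (dist_u0 (arc_reversal (\<alpha> x)))"
    using arc_stabilizer_vertex_orbits \<alpha>x by fastforce
  have "BS_aut (g \<circ> \<alpha>)" using BS_aut_comp BS_aut_arc_stabilizer[OF g(1)] \<alpha>(1) by blast
  moreover have "map (g \<circ> \<alpha>) [u, v, x] = [u0, v0, vertex_rep (BS_dist u x) (BS_dist v x)]"
    using g \<alpha> arc_stabilizer_fixes_base_arc[OF g(1)] dist_u0_normalized[OF \<alpha>] BS_adj_in_V assms
    by simp
  ultimately show ?thesis by (intro exI[of _ "g \<circ> \<alpha>"] conjI)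
qed

lemma edge_vertex_pairs_equivalent:
  assumes "x \<in> BS_V" "x' \<in> BS_V" "BS_adj u v" "BS_adj u' v'"
    and "BS_dist u x = BS_dist u' x'" "BS_dist v x = BS_dist v' x'"
  shows "\<exists>\<phi>. BS_aut \<phi> \<and> map \<phi> [u, v, x] = [u', v', x']"
proof -
  obtain \<beta> \<beta>' where "BS_aut \<beta>" "BS_aut \<beta>'" "map \<beta> [u, v, x] = map \<beta>' [u', v', x']"
    using vertex_normal_form[OF assms(3,1)] vertex_normal_form[OF assms(4,2)] assms(5,6) by metis
  moreover have "set [u', v', x'] \<subseteq> BS_V" using BS_adj_in_V[OF assms(4)] assms(2) by simp
  ultimately show ?thesis using BS_aut_transport by blast
qed

lemma edge_pairs_equivalent:
  assumes "BS_adj u v" "BS_adj x y" "BS_adj u' v'" "BS_adj x' y'"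
    and "BS_dist u x = BS_dist u' x'" "BS_dist u y = BS_dist u' y'"
    and "BS_dist v x = BS_dist v' x'" "BS_dist v y = BS_dist v' y'"
  shows "\<exists>\<phi>. BS_aut \<phi> \<and> map \<phi> [u, v, x, y] = [u', v', x', y']"
proof -
  have V: "u \<in> BS_V" "v \<in> BS_V" "x \<in> BS_V" "y \<in> BS_V"
    "u' \<in> BS_V" "v' \<in> BS_V" "x' \<in> BS_V" "y' \<in> BS_V"
    using assms(1-4) BS_adj_in_V by blast+
  obtain r \<beta> \<beta>' where \<beta>: "BS_aut \<beta>" "map \<beta> [u, v, x] = [u0, v0, r]"
    and \<beta>': "BS_aut \<beta>'" "map \<beta>' [u', v', x'] = [u0, v0, r]"
    using vertex_normal_form[OF assms(1) V(3)] vertex_normal_form[OF assms(3) V(7)] assms(5,7)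
    by metis
  have n: "BS_adj r (\<beta> y)" and n': "BS_adj r (\<beta>' y')"
    using BS_aut_adj[OF \<beta>(1) assms(2)] BS_aut_adj[OF \<beta>'(1) assms(4)] \<beta>(2) \<beta>'(2) by auto
  have "dist_u0 (\<beta> y) = dist_u0 (\<beta>' y')"
    and "dist_u0 (arc_reversal (\<beta> y)) = dist_u0 (arc_reversal (\<beta>' y'))"
    using dist_u0_normalized[OF \<beta>(1) _ _ V(1,2,4)] dist_u0_normalized[OF \<beta>'(1) _ _ V(5,6,8)]
      \<beta>(2) \<beta>'(2) assms(6,8) by simp_all
  then obtain h where h: "h \<in> set arc_stabilizer" "h r = r" "h (\<beta> y) = \<beta>' y'"
    using arc_stabilizer_nbrs_transitive n n' BS_adj_iff_nbrs by blast
  have "BS_aut (h \<circ> \<beta>)" using BS_aut_comp BS_aut_arc_stabilizer[OF h(1)] \<beta>(1) by blast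
  moreover have "map (h \<circ> \<beta>) [u, v, x, y] = map \<beta>' [u', v', x', y']"
    using \<beta>(2) \<beta>'(2) h arc_stabilizer_fixes_base_arc[OF h(1)] by simp
  moreover have "set [u', v', x', y'] \<subseteq> BS_V" using V(5-8) by simp
  ultimately show ?thesis using BS_aut_transport \<beta>'(1) by blast
qed

theorem lemma2p4:
  shows "(\<forall>u\<in>BS_V. \<forall>v\<in>BS_V. \<forall>x\<in>BS_V. \<forall>u'\<in>BS_V. \<forall>v'\<in>BS_V. \<forall>x'\<in>BS_V.
            BS_adj u v \<and> BS_adj u' v' \<and>
            BS_dist u x = BS_dist u' x' \<and> BS_dist v x = BS_dist v' x' \<longrightarrow>
            (\<exists>\<phi>. BS_aut \<phi> \<and> \<phi> u = u' \<and> \<phi> v = v' \<and> \<phi> x = x'))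
       \<and>
         (\<forall>u\<in>BS_V. \<forall>v\<in>BS_V. \<forall>x\<in>BS_V. \<forall>y\<in>BS_V.
          \<forall>u'\<in>BS_V. \<forall>v'\<in>BS_V. \<forall>x'\<in>BS_V. \<forall>y'\<in>BS_V.
            BS_adj u v \<and> BS_adj x y \<and> BS_adj u' v' \<and> BS_adj x' y' \<and>
            BS_dist u x = BS_dist u' x' \<and> BS_dist u y = BS_dist u' y' \<and>
            BS_dist v x = BS_dist v' x' \<and> BS_dist v y = BS_dist v' y' \<longrightarrow>
            (\<exists>\<phi>. BS_aut \<phi> \<and> \<phi> u = u' \<and> \<phi> v = v' \<and> \<phi> x = x' \<and> \<phi> y = y'))"
proof (intro conjI ballI impI; elim conjE)
  fix u v x u' v' x'
  assume "x \<in> BS_V" "x' \<in> BS_V" and "BS_adj u v" "BS_adj u' v'"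
    and "BS_dist u x = BS_dist u' x'" "BS_dist v x = BS_dist v' x'"
  from edge_vertex_pairs_equivalent[OF this]
  show "\<exists>\<phi>. BS_aut \<phi> \<and> \<phi> u = u' \<and> \<phi> v = v' \<and> \<phi> x = x'" by simp
next
  fix u v x y u' v' x' y'
  assume "BS_adj u v" "BS_adj x y" "BS_adj u' v'" "BS_adj x' y'"
    "BS_dist u x = BS_dist u' x'" "BS_dist u y = BS_dist u' y'"
    "BS_dist v x = BS_dist v' x'" "BS_dist v y = BS_dist v' y'"
  from edge_pairs_equivalent[OF this]
  show "\<exists>\<phi>. BS_aut \<phi> \<and> \<phi> u = u' \<and> \<phi> v = v' \<and> \<phi> x = x' \<and> \<phi> y = y'" by simp
qed

end
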